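(* Under the assumptions on $\Psi$ stated in the context, let $T\in(0,\infty]$, let $g^{in}\in L^1_{-2\beta,1}(0,\infty)$ be non-negative, and let $g$ be a weak solution on $[0,T)$. Then for every $q\in(0,\infty)$ and $t\in(0,T)$, $\int_0^q\zeta g(\zeta,t)d\zeta-\int_0^q\zeta g^{in}(\zeta)d\zeta=-\int_0^t\int_0^q\int_{q-\zeta}^\infty\zeta\Psi(\zeta,\eta)g(\zeta,s)g(\eta,s)\,d\eta\, d\zeta\, ds.$
   Context: $\Psi:(0,\infty)^2\to[0,\infty)$ is measurable and symmetric and there are $\beta>0$, $k>0$ with $\Psi(\zeta,\eta)\le k(\zeta\eta)^{-\beta}$ on $(0,1)^2$, $\Psi(\zeta,\eta)\le k\eta\zeta^{-\beta}$ on $(0,1)\times(1,\infty)$, and $\Psi(\zeta,\eta)\le k(\zeta+\eta)$ on $(1,\infty)^2$. $L^1_{-2\beta,1}(0,\infty):=L^1((0,\infty);(\zeta^{-2\beta}+\zeta)d\zeta)$. A weak solution on $[0,T)$ is a non-negative $g\in\mathcal{C}([0,T);L^1(0,\infty))\cap L^\infty(0,T;L^1_{-2\beta,1}(0,\infty))$ such that for every $t\in(0,T)$ and $\omega\in L^\infty(0,\infty)$, $\int_0^\infty[g(\zeta,t)-g^{in}(\zeta)]\omega(\zeta)d\zeta=\frac12\int_0^t\int_0^\infty\int_0^\infty[\omega(\zeta+\eta)-\omega(\zeta)-\omega(\eta)]\Psi(\zeta,\eta)g(\zeta,s)g(\eta,s)d\eta d\zeta ds$. *)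

theory Defs
  imports "HOL-Analysis.Analysis"
begin

definition kernel_assms :: "(real \<Rightarrow> real \<Rightarrow> real) \<Rightarrow> real \<Rightarrow> real \<Rightarrow> bool" where
  "kernel_assms Psi \<beta> k \<longleftrightarrow>
     \<beta> > 0 \<and> k > 0 \<and>
     (\<lambda>p. indicator ({0<..} \<times> {0<..}) p * Psi (fst p) (snd p)) \<in> borel_measurable borel \<and>
     (\<forall>x>0. \<forall>y>0. Psi x y \<ge> 0 \<and> Psi x y = Psi y x) \<and>
     (\<forall>x y. 0 < x \<and> x < 1 \<and> 0 < y \<and> y < 1 \<longrightarrow> Psi x y \<le> k * (x * y) powr (-\<beta>)) \<and>
     (\<forall>x y. 0 < x \<and> x < 1 \<and> 1 < y \<longrightarrow> Psi x y \<le> k * y * x powr (-\<beta>)) \<and>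
     (\<forall>x y. 1 < x \<and> 1 < y \<longrightarrow> Psi x y \<le> k * (x + y))"

definition L1_wt :: "real \<Rightarrow> (real \<Rightarrow> real) \<Rightarrow> bool" where
  "L1_wt \<beta> f \<longleftrightarrow> f \<in> borel_measurable (lebesgue_on {0<..}) \<and>
     set_integrable lebesgue {0<..} (\<lambda>z. (z powr (-2*\<beta>) + z) * f z)"

definition tint :: "ereal \<Rightarrow> real set" where
  "tint T = {t. 0 \<le> t \<and> ereal t < T}"

text \<open>Weak solution on [0,T); g z t is the value at size z and time t.\<close>
definition weak_solution ::
  "(real \<Rightarrow> real \<Rightarrow> real) \<Rightarrow> real \<Rightarrow> ereal \<Rightarrow> (real \<Rightarrow> real) \<Rightarrow> (real \<Rightarrow> real \<Rightarrow> real) \<Rightarrow> bool" where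
  "weak_solution Psi \<beta> T gin g \<longleftrightarrow>
     (\<forall>z>0. \<forall>t\<in>tint T. g z t \<ge> 0) \<and>
     (\<lambda>p. indicator ({0<..} \<times> tint T) p * g (fst p) (snd p)) \<in> borel_measurable borel \<and>
     (\<forall>t\<in>tint T. set_integrable lebesgue {0<..} (\<lambda>z. g z t)) \<and>
     (\<forall>t\<in>tint T. ((\<lambda>s. LINT z:{0<..}|lebesgue. \<bar>g z s - g z t\<bar>) \<longlongrightarrow> 0) (at t within tint T)) \<and>
     (\<exists>C. AE t in lebesgue_on (tint T). L1_wt \<beta> (\<lambda>z. g z t) \<and>
          (LINT z:{0<..}|lebesgue. (z powr (-2*\<beta>) + z) * g z t) \<le> C) \<and>
     (\<forall>t \<omega>. t \<in> tint T \<and> t > 0 \<and> \<omega> \<in> borel_measurable borel \<and> bounded (\<omega> ` {0<..}) \<longrightarrow>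
        (LINT z:{0<..}|lebesgue. (g z t - gin z) * \<omega> z) =
        1/2 * (LINT s:{0<..<t}|lebesgue. LINT z:{0<..}|lebesgue. LINT y:{0<..}|lebesgue.
                 (\<omega> (z + y) - \<omega> z - \<omega> y) * Psi z y * g z s * g y s))"

end

theory Submission
  imports Defs
begin

text \<open>
  Test the weak formulation with the truncated mass \<open>\<omega>\<^sub>q(x) = x\<close> on \<open>(0, q)\<close>, zero elsewhere.
  For \<open>z, y > 0\<close> its increment \<open>\<omega>\<^sub>q(z + y) - \<omega>\<^sub>q(z) - \<omega>\<^sub>q(y)\<close> equals \<open>-E(z, y) - E(y, z)\<close>,
  where \<open>E(z, y) = z [z < q] [z + y \<ge> q]\<close> is the mass that a particle of size \<open>z < q\<close> carries
  out of \<open>(0, q)\<close> by merging with one of size \<open>y\<close>. The kernel bound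
  \<open>\<Psi>(z, y) \<le> 2 k w(z) w(y)\<close> with \<open>w(z) = z powr (-2\<beta>) + z\<close> makes \<open>\<Psi>(z, y) g(z) g(y)\<close> integrable
  on the quadrant, so Fubini's theorem applies and the symmetry of \<open>\<Psi>\<close> shows that both terms
  contribute equally. The resulting factor \<open>-2\<close> cancels the \<open>1/2\<close> of the weak formulation.
\<close>

lemma sigma_finite_measure_lebesgue: "sigma_finite_measure (lebesgue :: 'a::euclidean_space measure)"
proof
  obtain A :: "'a set set" where "countable A" "A \<subseteq> sets lborel" "\<Union>A = space lborel"
    "\<forall>a\<in>A. emeasure lborel a \<noteq> \<infinity>"
    using lborel.sigma_finite_countable by blast
  then show "\<exists>A. countable A \<and> A \<subseteq> sets lebesgue \<and> \<Union>A = space (lebesgue :: 'a measure) \<and>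
      (\<forall>a\<in>A. emeasure lebesgue a \<noteq> \<infinity>)"
    by (intro exI[of _ A]) (auto simp: subset_eq sets_completionI_sets)
qed

interpretation lebesgue: sigma_finite_measure "lebesgue :: 'a::euclidean_space measure"
  by (rule sigma_finite_measure_lebesgue)

interpretation lebesgue_pair:
  pair_sigma_finite "lebesgue :: 'a::euclidean_space measure" "lebesgue :: 'b::euclidean_space measure" ..

lemma borel_measurable_lebesgue_ident[measurable]: "(\<lambda>x::real. x) \<in> borel_measurable lebesgue"
  by (intro measurable_completion) simp

lemma borel_measurable_lebesgue_pair:
  fixes f :: "real \<times> real \<Rightarrow> real"
  assumes "f \<in> borel_measurable borel"
  shows "f \<in> borel_measurable (lebesgue \<Otimes>\<^sub>M lebesgue)"
proof -
  have "sets (lborel \<Otimes>\<^sub>M lborel) = sets (borel :: (real \<times> real) measure)"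
    by (metis borel_prod sets_lborel sets_pair_measure_cong)
  then have f: "f \<in> borel_measurable (lborel \<Otimes>\<^sub>M lborel)"
    using assms measurable_cong_sets by blast
  have "(\<lambda>x. x) \<in> lebesgue \<rightarrow>\<^sub>M (lborel :: real measure)"
    by (intro measurable_completion) simp
  then have "(\<lambda>p. (fst p, snd p)) \<in> (lebesgue \<Otimes>\<^sub>M lebesgue) \<rightarrow>\<^sub>M (lborel \<Otimes>\<^sub>M lborel :: (real \<times> real) measure)"
    by measurable
  from measurable_comp[OF this f] show ?thesis by (simp add: comp_def)
qed

lemma borel_measurable_time_slice:
  fixes g :: "'a::topological_space \<Rightarrow> 'b::topological_space \<Rightarrow> real"
  assumes "(\<lambda>p. indicator (A \<times> B) p * g (fst p) (snd p)) \<in> borel_measurable borel" and "s \<in> B"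
  shows "(\<lambda>z. indicator A z * g z s) \<in> borel_measurable borel"
proof -
  have "(\<lambda>z. (z, s)) \<in> borel_measurable borel"
    by (intro borel_measurable_continuous_onI continuous_intros)
  from measurable_compose[OF this assms(1)] show ?thesis
    using \<open>s \<in> B\<close> by (simp add: indicator_def)
qed

lemma integral_cong_AE_lebesgue:
  fixes f g :: "'a::euclidean_space \<Rightarrow> real"
  assumes "AE x in lebesgue. f x = g x"
  shows "integral\<^sup>L lebesgue f = integral\<^sup>L lebesgue g"
proof (cases "g \<in> borel_measurable lebesgue")
  case True
  moreover have "AE x in lebesgue. g x = f x"
    using assms by (auto elim: eventually_mono)
  then have "f \<in> borel_measurable lebesgue"
    by (rule borel_measurable_AE[OF True])
  ultimately show ?thesis using assms by (intro integral_cong_AE) auto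
next
  case False
  then have "f \<notin> borel_measurable lebesgue"
    using borel_measurable_AE[OF _ assms] by blast
  then have "\<not> integrable lebesgue f" "\<not> integrable lebesgue g"
    using False by auto
  then show ?thesis by (simp add: not_integrable_integral_eq)
qed

lemma set_integral_cong_AE_lebesgue:
  fixes f g :: "'a::euclidean_space \<Rightarrow> real"
  assumes "AE x in lebesgue. x \<in> A \<longrightarrow> f x = g x"
  shows "(LINT x:A|lebesgue. f x) = (LINT x:A|lebesgue. g x)"
  unfolding set_lebesgue_integral_def
  using assms by (intro integral_cong_AE_lebesgue) (auto elim: eventually_mono simp: indicator_def)

lemma (in pair_sigma_finite) integrable_fst_times_snd:
  fixes f :: "'a \<Rightarrow> real" and g :: "'b \<Rightarrow> real"
  assumes f: "integrable M1 f" and g: "integrable M2 g"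
  shows "integrable (M1 \<Otimes>\<^sub>M M2) (\<lambda>p. f (fst p) * g (snd p))"
proof (rule Fubini_integrable)
  have [measurable]: "f \<in> borel_measurable M1" "g \<in> borel_measurable M2"
    using f g by auto
  show "(\<lambda>p. f (fst p) * g (snd p)) \<in> borel_measurable (M1 \<Otimes>\<^sub>M M2)" by measurable
  show "integrable M1 (\<lambda>x. \<integral>y. norm (f (fst (x, y)) * g (snd (x, y))) \<partial>M2)"
    using f by (simp add: abs_mult)
  show "AE x in M1. integrable M2 (\<lambda>y. f (fst (x, y)) * g (snd (x, y)))"
    using g by simp
qed

lemma (in sigma_finite_measure) integral_swap_symmetric:
  fixes f P :: "'a \<times> 'a \<Rightarrow> real"
  assumes "(\<lambda>p. f p * P p) \<in> borel_measurable (M \<Otimes>\<^sub>M M)" and "\<And>x y. P (y, x) = P (x, y)"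
  shows "(\<integral>p. f (snd p, fst p) * P p \<partial>(M \<Otimes>\<^sub>M M)) = (\<integral>p. f p * P p \<partial>(M \<Otimes>\<^sub>M M))"
proof -
  interpret pair_sigma_finite M M ..
  show ?thesis
    using integral_product_swap[OF assms(1)] assms(2) by (simp add: case_prod_beta')
qed

lemma (in sigma_finite_measure) integrable_swap_symmetric:
  fixes f P :: "'a \<times> 'a \<Rightarrow> real"
  assumes "integrable (M \<Otimes>\<^sub>M M) (\<lambda>p. f p * P p)" and "\<And>x y. P (y, x) = P (x, y)"
  shows "integrable (M \<Otimes>\<^sub>M M) (\<lambda>p. f (snd p, fst p) * P p)"
proof -
  interpret pair_sigma_finite M M ..
  show ?thesis
    using integrable_product_swap[OF assms(1)] assms(2) by (simp add: case_prod_beta')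
qed

lemma AE_lebesgue_pair_off_lines:
  "AE p in lebesgue \<Otimes>\<^sub>M lebesgue. fst p \<noteq> (a::real) \<and> snd p \<noteq> (b::real)"
proof (rule lebesgue_pair.AE_pair_measure)
  show "{p \<in> space (lebesgue \<Otimes>\<^sub>M lebesgue). fst p \<noteq> a \<and> snd p \<noteq> b} \<in> sets (lebesgue \<Otimes>\<^sub>M lebesgue)"
    by measurable
  show "AE x in lebesgue. AE y in lebesgue. fst (x, y) \<noteq> a \<and> snd (x, y) \<noteq> b"
    using AE_completion[OF AE_lborel_singleton[of a]] AE_completion[OF AE_lborel_singleton[of b]]
    by (auto elim!: eventually_mono)
qed

section \<open>The kernel bound\<close>

abbreviation moment_weight :: "real \<Rightarrow> real \<Rightarrow> real" where
  "moment_weight \<beta> z \<equiv> z powr (-2*\<beta>) + z"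

lemma one_le_moment_weight:
  fixes x \<beta> :: real assumes "x > 0" "\<beta> \<ge> 0"
  shows "1 \<le> moment_weight \<beta> x"
proof (cases "x < 1")
  case True
  then have "x powr 0 \<le> x powr (-2*\<beta>)" using assms by (intro powr_mono') auto
  then show ?thesis using assms by simp
next
  case False
  then show ?thesis using powr_ge_zero[of x "-2*\<beta>"] by linarith
qed

lemma powr_neg_le_moment_weight:
  fixes x \<beta> :: real assumes "0 < x" "x < 1" "\<beta> \<ge> 0"
  shows "x powr (-\<beta>) \<le> moment_weight \<beta> x"
proof -
  have "x powr (-\<beta>) \<le> x powr (-2*\<beta>)" using assms by (intro powr_mono') auto
  then show ?thesis using assms by simp
qed

lemma kernel_le_moment_weight:
  assumes K: "kernel_assms Psi \<beta> k" and "z > 0" "y > 0" "z \<noteq> 1" "y \<noteq> 1"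
  shows "Psi z y \<le> 2 * k * (moment_weight \<beta> z * moment_weight \<beta> y)"
proof -
  from K have "\<beta> > 0" "k > 0" "Psi z y = Psi y z"
    and small: "\<And>x y. 0 < x \<and> x < 1 \<and> 0 < y \<and> y < 1 \<Longrightarrow> Psi x y \<le> k * (x * y) powr (-\<beta>)"
    and mixed: "\<And>x y. 0 < x \<and> x < 1 \<and> 1 < y \<Longrightarrow> Psi x y \<le> k * y * x powr (-\<beta>)"
    and large: "\<And>x y. 1 < x \<and> 1 < y \<Longrightarrow> Psi x y \<le> k * (x + y)"
    using assms unfolding kernel_assms_def by auto
  let ?wz = "moment_weight \<beta> z" and ?wy = "moment_weight \<beta> y"
  have wz: "1 \<le> ?wz" and wy: "1 \<le> ?wy"
    using one_le_moment_weight \<open>\<beta> > 0\<close> assms by auto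
  have double: "k * (?wz * ?wy) \<le> 2 * k * (?wz * ?wy)"
    using \<open>k > 0\<close> wz wy by simp
  consider "z < 1" "y < 1" | "z < 1" "y > 1" | "z > 1" "y < 1" | "z > 1" "y > 1"
    using assms by fastforce
  then show ?thesis
  proof cases
    case 1
    then have "Psi z y \<le> k * (z powr (-\<beta>) * y powr (-\<beta>))"
      using small assms by (simp add: powr_mult)
    also have "\<dots> \<le> k * (?wz * ?wy)"
      using 1 assms \<open>\<beta> > 0\<close> \<open>k > 0\<close> powr_neg_le_moment_weight
      by (intro mult_left_mono mult_mono) auto
    finally show ?thesis using double by linarith
  next
    case 2
    then have "Psi z y \<le> k * y * z powr (-\<beta>)"
      using mixed assms by simp
    also have "\<dots> = k * (z powr (-\<beta>) * y)" by simp
    also have "\<dots> \<le> k * (?wz * ?wy)"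
      using 2 assms \<open>\<beta> > 0\<close> \<open>k > 0\<close> powr_neg_le_moment_weight
      by (intro mult_left_mono mult_mono) auto
    finally show ?thesis using double by linarith
  next
    case 3
    then have "Psi y z \<le> k * z * y powr (-\<beta>)"
      using mixed assms by simp
    then have "Psi z y \<le> k * (z * y powr (-\<beta>))"
      using \<open>Psi z y = Psi y z\<close> by (simp add: mult.assoc)
    also have "\<dots> \<le> k * (?wz * ?wy)"
      using 3 assms \<open>\<beta> > 0\<close> \<open>k > 0\<close> powr_neg_le_moment_weight
      by (intro mult_left_mono mult_mono) auto
    finally show ?thesis using double by linarith
  next
    case 4
    have "?wz \<le> ?wz * ?wy" "?wy \<le> ?wz * ?wy"
      using mult_left_mono[OF wy, of ?wz] mult_right_mono[OF wz, of ?wy] wz wy by simp_all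
    moreover have "z \<le> ?wz" "y \<le> ?wy" by simp_all
    ultimately have "z + y \<le> 2 * (?wz * ?wy)" by linarith
    then have "k * (z + y) \<le> k * (2 * (?wz * ?wy))"
      using \<open>k > 0\<close> by simp
    then show ?thesis using large[of z y] 4 by simp
  qed
qed

lemma L1_wt_set_integrable:
  assumes "\<beta> \<ge> 0" and "L1_wt \<beta> f"
  shows "set_integrable lebesgue {0<..} f"
  unfolding set_integrable_def
proof (rule Bochner_Integration.integrable_bound)
  show "integrable lebesgue (\<lambda>z. indicator {0<..} z *\<^sub>R (moment_weight \<beta> z * f z))"
    using assms(2) unfolding L1_wt_def set_integrable_def by blast
  show "(\<lambda>z. indicator {0<..} z *\<^sub>R f z) \<in> borel_measurable lebesgue"
    using assms(2) unfolding L1_wt_def by (subst (asm) borel_measurable_restrict_space_iff) auto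
  show "AE z in lebesgue. norm (indicator {0<..} z *\<^sub>R f z)
      \<le> norm (indicator {0<..} z *\<^sub>R (moment_weight \<beta> z * f z))"
  proof (intro AE_I2)
    fix z :: real
    show "norm (indicator {0<..} z *\<^sub>R f z) \<le> norm (indicator {0<..} z *\<^sub>R (moment_weight \<beta> z * f z))"
    proof (cases "z > 0")
      case True
      then have "1 * \<bar>f z\<bar> \<le> moment_weight \<beta> z * \<bar>f z\<bar>"
        using one_le_moment_weight[OF True assms(1)] by (intro mult_right_mono) auto
      then show ?thesis using True by (simp add: abs_mult)
    qed simp
  qed
qed

section \<open>The truncated mass\<close>

definition truncated_mass :: "real \<Rightarrow> real \<Rightarrow> real" where
  "truncated_mass q x = x * indicator {0<..<q} x"

text \<open>The interval \<open>{q..}\<close> is closed so that \<open>truncated_mass_increment\<close> also holds for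
  \<open>z + y = q\<close>; the theorem's condition \<open>y > q - z\<close> differs from it only on a null set.\<close>

definition escaping_mass :: "real \<Rightarrow> real \<Rightarrow> real \<Rightarrow> real" where
  "escaping_mass q z y = z * indicator {0<..<q} z * indicator {q..} (z + y)"

lemma truncated_mass_measurable[measurable]: "truncated_mass q \<in> borel_measurable borel"
  unfolding truncated_mass_def by measurable

lemma escaping_mass_measurable[measurable]:
  "(\<lambda>p. escaping_mass q (fst p) (snd p)) \<in> borel_measurable (lebesgue \<Otimes>\<^sub>M lebesgue)"
  unfolding escaping_mass_def by measurable

lemma abs_truncated_mass_le: "q > 0 \<Longrightarrow> \<bar>truncated_mass q x\<bar> \<le> q"
  unfolding truncated_mass_def by (auto simp: indicator_def)

lemma abs_escaping_mass_le: "q > 0 \<Longrightarrow> \<bar>escaping_mass q z y\<bar> \<le> q"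
  unfolding escaping_mass_def by (auto simp: indicator_def)

lemma truncated_mass_increment:
  assumes "z > 0" "y > 0"
  shows "truncated_mass q (z + y) - truncated_mass q z - truncated_mass q y
    = - escaping_mass q z y - escaping_mass q y z"
  using assms unfolding truncated_mass_def escaping_mass_def by (auto simp: indicator_def)

lemma set_integral_times_truncated_mass:
  assumes f: "set_integrable lebesgue {0<..} f" and "q > 0"
  shows "set_integrable lebesgue {0<..} (\<lambda>z. f z * truncated_mass q z)"
    and "(LINT z:{0<..}|lebesgue. f z * truncated_mass q z) = (LINT z:{0<..<q}|lebesgue. z * f z)"
proof -
  have "truncated_mass q \<in> borel_measurable (lebesgue_on {0<..})"
    by (intro measurable_restrict_space1 measurable_completion) (simp add: measurable_lborel1)
  moreover have "bounded (truncated_mass q ` {0<..})"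
    using abs_truncated_mass_le[OF \<open>q > 0\<close>] by (auto simp: bounded_iff)
  ultimately have "set_integrable lebesgue {0<..} (\<lambda>z. truncated_mass q z * f z)"
    using f by (intro absolutely_integrable_bounded_measurable_product_real) auto
  then show "set_integrable lebesgue {0<..} (\<lambda>z. f z * truncated_mass q z)"
    by (simp add: mult.commute)
  show "(LINT z:{0<..}|lebesgue. f z * truncated_mass q z) = (LINT z:{0<..<q}|lebesgue. z * f z)"
    unfolding set_lebesgue_integral_def
    by (intro Bochner_Integration.integral_cong) (auto simp: truncated_mass_def indicator_def)
qed

section \<open>The coagulation term\<close>

context
  fixes Psi :: "real \<Rightarrow> real \<Rightarrow> real" and \<beta> k :: real and G :: "real \<Rightarrow> real"
  assumes kernel: "kernel_assms Psi \<beta> k"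
    and G_measurable: "(\<lambda>z. indicator {0<..} z * G z) \<in> borel_measurable borel"
    and G_nonneg: "\<And>z. 0 < z \<Longrightarrow> 0 \<le> G z"
    and G_moment: "set_integrable lebesgue {0<..} (\<lambda>z. moment_weight \<beta> z * G z)"
begin

definition coag_rate :: "real \<times> real \<Rightarrow> real" where
  "coag_rate p = indicator ({0<..} \<times> {0<..}) p * Psi (fst p) (snd p) * G (fst p) * G (snd p)"

lemma coag_rate_measurable[measurable]: "coag_rate \<in> borel_measurable (lebesgue \<Otimes>\<^sub>M lebesgue)"
proof -
  have [measurable]: "(\<lambda>p. indicator ({0<..} \<times> {0<..}) p * Psi (fst p) (snd p))
      \<in> borel_measurable (lebesgue \<Otimes>\<^sub>M lebesgue)"
    using kernel unfolding kernel_assms_def by (intro borel_measurable_lebesgue_pair) simp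
  have [measurable]: "(\<lambda>z. indicator {0<..} z * G z) \<in> borel_measurable lebesgue"
    using G_measurable by (intro measurable_completion) (simp add: measurable_lborel1)
  have "coag_rate = (\<lambda>p. (indicator ({0<..} \<times> {0<..}) p * Psi (fst p) (snd p))
      * (indicator {0<..} (fst p) * G (fst p)) * (indicator {0<..} (snd p) * G (snd p)))"
    by (auto simp: coag_rate_def indicator_def fun_eq_iff)
  then show ?thesis by simp
qed

lemma coag_rate_nonneg: "0 \<le> coag_rate p"
  using kernel G_nonneg unfolding kernel_assms_def coag_rate_def
  by (auto simp: indicator_def)

lemma coag_rate_swap: "coag_rate (y, z) = coag_rate (z, y)"
  using kernel unfolding kernel_assms_def coag_rate_def by (auto simp: indicator_def)

lemma coag_rate_integrable: "integrable (lebesgue \<Otimes>\<^sub>M lebesgue) coag_rate"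
proof (rule Bochner_Integration.integrable_bound)
  let ?m = "\<lambda>z. indicator {0<..} z * (moment_weight \<beta> z * G z)"
  have "integrable lebesgue ?m"
    using G_moment unfolding set_integrable_def by simp
  then show "integrable (lebesgue \<Otimes>\<^sub>M lebesgue) (\<lambda>p. 2 * k * ?m (fst p) * ?m (snd p))"
    by (intro lebesgue_pair.integrable_fst_times_snd integrable_mult_right)
  show "AE p in lebesgue \<Otimes>\<^sub>M lebesgue. norm (coag_rate p) \<le> norm (2 * k * ?m (fst p) * ?m (snd p))"
    using AE_lebesgue_pair_off_lines[of 1 1]
  proof eventually_elim
    case (elim p)
    obtain z y where p: "p = (z, y)" by (cases p)
    show ?case
    proof (cases "z > 0 \<and> y > 0")
      case True
      have "coag_rate p = Psi z y * (G z * G y)"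
        using True p by (simp add: coag_rate_def)
      also have "\<dots> \<le> 2 * k * (moment_weight \<beta> z * moment_weight \<beta> y) * (G z * G y)"
        using kernel_le_moment_weight[OF kernel] G_nonneg elim p True by (intro mult_right_mono) auto
      also have "\<dots> = 2 * k * ?m (fst p) * ?m (snd p)"
        using True p by simp
      finally show ?thesis
        using coag_rate_nonneg[of p] unfolding real_norm_def by linarith
    qed (auto simp: p coag_rate_def)
  qed
qed simp

lemma integrable_bounded_times_coag_rate:
  assumes [measurable]: "F \<in> borel_measurable (lebesgue \<Otimes>\<^sub>M lebesgue)" and "\<And>p. \<bar>F p\<bar> \<le> C"
  shows "integrable (lebesgue \<Otimes>\<^sub>M lebesgue) (\<lambda>p. F p * coag_rate p)"
proof (rule Bochner_Integration.integrable_bound)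
  show "integrable (lebesgue \<Otimes>\<^sub>M lebesgue) (\<lambda>p. C * coag_rate p)"
    using coag_rate_integrable by simp
  show "AE p in lebesgue \<Otimes>\<^sub>M lebesgue. norm (F p * coag_rate p) \<le> norm (C * coag_rate p)"
  proof (intro AE_I2)
    fix p
    have "\<bar>F p\<bar> * coag_rate p \<le> C * coag_rate p"
      using assms(2) coag_rate_nonneg by (rule mult_right_mono)
    then show "norm (F p * coag_rate p) \<le> norm (C * coag_rate p)"
      using coag_rate_nonneg[of p] assms(2)[of p] by (simp add: abs_mult)
  qed
qed simp

lemma coag_weak_term_eq_pair_integral:
  assumes [measurable]: "\<omega> \<in> borel_measurable borel" and bounded: "\<And>x. \<bar>\<omega> x\<bar> \<le> C"
  shows "(LINT z:{0<..}|lebesgue. LINT y:{0<..}|lebesgue. (\<omega> (z + y) - \<omega> z - \<omega> y) * Psi z y * G z * G y)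
    = (\<integral>p. (\<omega> (fst p + snd p) - \<omega> (fst p) - \<omega> (snd p)) * coag_rate p \<partial>(lebesgue \<Otimes>\<^sub>M lebesgue))"
proof -
  let ?D = "\<lambda>p. \<omega> (fst p + snd p) - \<omega> (fst p) - \<omega> (snd p)"
  have "\<bar>?D p\<bar> \<le> 3 * C" for p
    using bounded[of "fst p + snd p"] bounded[of "fst p"] bounded[of "snd p"] by arith
  then have integrable: "integrable (lebesgue \<Otimes>\<^sub>M lebesgue) (\<lambda>p. ?D p * coag_rate p)"
    by (intro integrable_bounded_times_coag_rate) measurable
  have "(\<integral>p. ?D p * coag_rate p \<partial>(lebesgue \<Otimes>\<^sub>M lebesgue))
      = (\<integral>z. \<integral>y. ?D (z, y) * coag_rate (z, y) \<partial>lebesgue \<partial>lebesgue)"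
    using lebesgue_pair.integral_fst'[OF integrable] by simp
  moreover have "indicator {0<..} z *\<^sub>R (LINT y:{0<..}|lebesgue. (\<omega> (z + y) - \<omega> z - \<omega> y) * Psi z y * G z * G y)
      = (\<integral>y. ?D (z, y) * coag_rate (z, y) \<partial>lebesgue)" for z
  proof -
    have "indicator {0<..} z *\<^sub>R (LINT y:{0<..}|lebesgue. (\<omega> (z + y) - \<omega> z - \<omega> y) * Psi z y * G z * G y)
        = (\<integral>y. indicator {0<..} z * (indicator {0<..} y * ((\<omega> (z + y) - \<omega> z - \<omega> y) * Psi z y * G z * G y)) \<partial>lebesgue)"
      unfolding set_lebesgue_integral_def by simp
    also have "\<dots> = (\<integral>y. ?D (z, y) * coag_rate (z, y) \<partial>lebesgue)"
      by (intro Bochner_Integration.integral_cong) (auto simp: coag_rate_def indicator_def)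
    finally show ?thesis .
  qed
  ultimately show ?thesis
    unfolding set_lebesgue_integral_def[where A = "{0<..}" and f = "\<lambda>z. LINT y:_|_. _ z y"] by simp
qed

lemma escaping_term_eq_pair_integral:
  assumes "q > 0"
  shows "(LINT z:{0<..<q}|lebesgue. LINT y:{q - z<..}|lebesgue. z * Psi z y * G z * G y)
    = (\<integral>p. escaping_mass q (fst p) (snd p) * coag_rate p \<partial>(lebesgue \<Otimes>\<^sub>M lebesgue))"
proof -
  have integrable: "integrable (lebesgue \<Otimes>\<^sub>M lebesgue) (\<lambda>p. escaping_mass q (fst p) (snd p) * coag_rate p)"
    using integrable_bounded_times_coag_rate[of "\<lambda>p. escaping_mass q (fst p) (snd p)" q]
      abs_escaping_mass_le[OF assms] by simp
  have "indicator {0<..<q} z *\<^sub>R (LINT y:{q - z<..}|lebesgue. z * Psi z y * G z * G y)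
      = (\<integral>y. escaping_mass q z y * coag_rate (z, y) \<partial>lebesgue)" for z
  proof (cases "0 < z \<and> z < q")
    case True
    have "AE y in lebesgue. y \<noteq> q - z"
      by (rule AE_completion[OF AE_lborel_singleton])
    then have "AE y in lebesgue. indicator {q - z<..} y * (z * Psi z y * G z * G y)
        = escaping_mass q z y * coag_rate (z, y)"
      by eventually_elim (use True in \<open>auto simp: escaping_mass_def coag_rate_def indicator_def\<close>)
    then have "(\<integral>y. indicator {q - z<..} y * (z * Psi z y * G z * G y) \<partial>lebesgue)
        = (\<integral>y. escaping_mass q z y * coag_rate (z, y) \<partial>lebesgue)"
      by (rule integral_cong_AE_lebesgue)
    then show ?thesis
      using True unfolding set_lebesgue_integral_def by simp
  qed (auto simp: escaping_mass_def)
  then show ?thesis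
    using lebesgue_pair.integral_fst'[OF integrable]
    unfolding set_lebesgue_integral_def[of lebesgue "{0<..<q}"] by simp
qed

lemma coag_weak_term_truncated_mass:
  assumes "q > 0"
  shows "(LINT z:{0<..}|lebesgue. LINT y:{0<..}|lebesgue.
      (truncated_mass q (z + y) - truncated_mass q z - truncated_mass q y) * Psi z y * G z * G y)
    = -2 * (LINT z:{0<..<q}|lebesgue. LINT y:{q - z<..}|lebesgue. z * Psi z y * G z * G y)"
proof -
  let ?E = "\<lambda>p. escaping_mass q (fst p) (snd p) * coag_rate p"
  let ?E' = "\<lambda>p. escaping_mass q (snd p) (fst p) * coag_rate p"
  have int_E: "integrable (lebesgue \<Otimes>\<^sub>M lebesgue) ?E"
    using integrable_bounded_times_coag_rate[of "\<lambda>p. escaping_mass q (fst p) (snd p)" q]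
      abs_escaping_mass_le[OF assms] by simp
  have int_E': "integrable (lebesgue \<Otimes>\<^sub>M lebesgue) ?E'"
    using lebesgue.integrable_swap_symmetric[OF int_E] coag_rate_swap by simp
  have "(LINT z:{0<..}|lebesgue. LINT y:{0<..}|lebesgue.
      (truncated_mass q (z + y) - truncated_mass q z - truncated_mass q y) * Psi z y * G z * G y)
    = (\<integral>p. (truncated_mass q (fst p + snd p) - truncated_mass q (fst p) - truncated_mass q (snd p))
        * coag_rate p \<partial>(lebesgue \<Otimes>\<^sub>M lebesgue))"
    using abs_truncated_mass_le[OF assms] by (intro coag_weak_term_eq_pair_integral) simp_all
  also have "\<dots> = (\<integral>p. - ?E p - ?E' p \<partial>(lebesgue \<Otimes>\<^sub>M lebesgue))"
  proof (intro Bochner_Integration.integral_cong refl)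
    fix p :: "real \<times> real"
    show "(truncated_mass q (fst p + snd p) - truncated_mass q (fst p) - truncated_mass q (snd p))
        * coag_rate p = - ?E p - ?E' p"
    proof (cases "fst p > 0 \<and> snd p > 0")
      case True
      then show ?thesis
        using truncated_mass_increment[of "fst p" "snd p" q] by (simp add: left_diff_distrib)
    qed (auto simp: coag_rate_def indicator_def)
  qed
  also have "\<dots> = - (\<integral>p. ?E p \<partial>(lebesgue \<Otimes>\<^sub>M lebesgue)) - (\<integral>p. ?E' p \<partial>(lebesgue \<Otimes>\<^sub>M lebesgue))"
    using int_E int_E' by simp
  also have "\<dots> = -2 * (\<integral>p. ?E p \<partial>(lebesgue \<Otimes>\<^sub>M lebesgue))"
    using lebesgue.integral_swap_symmetric[of "\<lambda>p. escaping_mass q (fst p) (snd p)" coag_rate]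
      coag_rate_swap by simp
  finally show ?thesis
    using escaping_term_eq_pair_integral[OF assms] by simp
qed

end

lemma AE_weak_solution_L1_wt:
  assumes "weak_solution Psi \<beta> T gin g"
  shows "AE s in lebesgue. s \<in> tint T \<longrightarrow> L1_wt \<beta> (\<lambda>z. g z s)"
proof -
  have "tint T \<in> sets lebesgue"
    unfolding tint_def by (intro sets_completionI_sets) measurable
  moreover obtain C where "AE s in lebesgue_on (tint T). L1_wt \<beta> (\<lambda>z. g z s) \<and>
      (LINT z:{0<..}|lebesgue. moment_weight \<beta> z * g z s) \<le> C"
    using assms unfolding weak_solution_def by blast
  ultimately show ?thesis
    by (subst (asm) AE_restrict_space_iff) (auto elim: eventually_mono)
qed

lemma weak_solution_slice_coag_term:
  assumes kernel: "kernel_assms Psi \<beta> k" and weak: "weak_solution Psi \<beta> T gin g"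
    and "s \<in> tint T" and "L1_wt \<beta> (\<lambda>z. g z s)" and "q > 0"
  shows "(LINT z:{0<..}|lebesgue. LINT y:{0<..}|lebesgue.
      (truncated_mass q (z + y) - truncated_mass q z - truncated_mass q y) * Psi z y * g z s * g y s)
    = -2 * (LINT z:{0<..<q}|lebesgue. LINT y:{q - z<..}|lebesgue. z * Psi z y * g z s * g y s)"
proof (rule coag_weak_term_truncated_mass[OF kernel _ _ _ \<open>q > 0\<close>])
  show "(\<lambda>z. indicator {0<..} z * g z s) \<in> borel_measurable borel"
    using weak \<open>s \<in> tint T\<close> unfolding weak_solution_def by (blast intro: borel_measurable_time_slice)
  show "\<And>z. 0 < z \<Longrightarrow> 0 \<le> g z s"
    using weak \<open>s \<in> tint T\<close> unfolding weak_solution_def by blast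
  show "set_integrable lebesgue {0<..} (\<lambda>z. moment_weight \<beta> z * g z s)"
    using \<open>L1_wt \<beta> (\<lambda>z. g z s)\<close> unfolding L1_wt_def by blast
qed

lemma weak_solution_coag_term:
  assumes kernel: "kernel_assms Psi \<beta> k" and weak: "weak_solution Psi \<beta> T gin g"
    and "t \<in> tint T" and "q > 0"
  shows "(LINT s:{0<..<t}|lebesgue. LINT z:{0<..}|lebesgue. LINT y:{0<..}|lebesgue.
      (truncated_mass q (z + y) - truncated_mass q z - truncated_mass q y) * Psi z y * g z s * g y s)
    = -2 * (LINT s:{0<..<t}|lebesgue. LINT z:{0<..<q}|lebesgue. LINT y:{q - z<..}|lebesgue.
      z * Psi z y * g z s * g y s)"
proof -
  let ?F = "\<lambda>s. LINT z:{0<..}|lebesgue. LINT y:{0<..}|lebesgue.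
    (truncated_mass q (z + y) - truncated_mass q z - truncated_mass q y) * Psi z y * g z s * g y s"
  let ?H = "\<lambda>s. LINT z:{0<..<q}|lebesgue. LINT y:{q - z<..}|lebesgue. z * Psi z y * g z s * g y s"
  have in_tint: "s \<in> tint T" if "s \<in> {0<..<t}" for s
    using that \<open>t \<in> tint T\<close> unfolding tint_def by (auto intro: order.strict_trans[of _ "ereal t"])
  have "AE s in lebesgue. s \<in> {0<..<t} \<longrightarrow> ?F s = -2 * ?H s"
    using AE_weak_solution_L1_wt[OF weak]
    by eventually_elim (use weak_solution_slice_coag_term[OF kernel weak _ _ \<open>q > 0\<close>] in_tint in blast)
  then have "(LINT s:{0<..<t}|lebesgue. ?F s) = (LINT s:{0<..<t}|lebesgue. -2 * ?H s)"
    by (rule set_integral_cong_AE_lebesgue)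
  also have "\<dots> = -2 * (LINT s:{0<..<t}|lebesgue. ?H s)"
    by (rule set_integral_mult_right)
  finally show ?thesis .
qed

lemma weak_solution_truncated_mass:
  assumes kernel: "kernel_assms Psi \<beta> k" and gin: "L1_wt \<beta> gin" and weak: "weak_solution Psi \<beta> T gin g"
    and "t \<in> tint T" and "t > 0" and "q > 0"
  shows "(LINT z:{0<..<q}|lebesgue. z * g z t) - (LINT z:{0<..<q}|lebesgue. z * gin z)
    = 1/2 * (LINT s:{0<..<t}|lebesgue. LINT z:{0<..}|lebesgue. LINT y:{0<..}|lebesgue.
      (truncated_mass q (z + y) - truncated_mass q z - truncated_mass q y) * Psi z y * g z s * g y s)"
proof -
  have "\<beta> \<ge> 0" using kernel unfolding kernel_assms_def by simp
  have "set_integrable lebesgue {0<..} (\<lambda>z. g z t)"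
    using weak \<open>t \<in> tint T\<close> unfolding weak_solution_def by blast
  moreover have "set_integrable lebesgue {0<..} gin"
    using L1_wt_set_integrable[OF \<open>\<beta> \<ge> 0\<close> gin] .
  ultimately have "(LINT z:{0<..<q}|lebesgue. z * g z t) - (LINT z:{0<..<q}|lebesgue. z * gin z)
      = (LINT z:{0<..}|lebesgue. (g z t - gin z) * truncated_mass q z)"
    using set_integral_times_truncated_mass[OF _ \<open>q > 0\<close>] by (simp add: left_diff_distrib set_integral_diff)
  moreover have "bounded (truncated_mass q ` {0<..})"
    using abs_truncated_mass_le[OF \<open>q > 0\<close>] by (auto simp: bounded_iff)
  ultimately show ?thesis
    using weak \<open>t \<in> tint T\<close> \<open>t > 0\<close> unfolding weak_solution_def by simp
qed

theorem lemma3p1: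
  fixes Psi :: "real \<Rightarrow> real \<Rightarrow> real" and \<beta> k :: real and T :: ereal
    and gin :: "real \<Rightarrow> real" and g :: "real \<Rightarrow> real \<Rightarrow> real"
  assumes "kernel_assms Psi \<beta> k"
    and "T > 0"
    and "L1_wt \<beta> gin" and "\<forall>z>0. gin z \<ge> 0"
    and "weak_solution Psi \<beta> T gin g"
  shows "\<forall>q>0. \<forall>t. 0 < t \<and> ereal t < T \<longrightarrow>
    (LINT z:{0<..<q}|lebesgue. z * g z t) - (LINT z:{0<..<q}|lebesgue. z * gin z) =
    - (LINT s:{0<..<t}|lebesgue. LINT z:{0<..<q}|lebesgue. LINT y:{q - z<..}|lebesgue.
         z * Psi z y * g z s * g y s)"
proof (intro allI impI)
  fix q t :: real
  assume "q > 0" and "0 < t \<and> ereal t < T"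
  then have "t \<in> tint T" and "t > 0" unfolding tint_def by simp_all
  then show "(LINT z:{0<..<q}|lebesgue. z * g z t) - (LINT z:{0<..<q}|lebesgue. z * gin z) =
    - (LINT s:{0<..<t}|lebesgue. LINT z:{0<..<q}|lebesgue. LINT y:{q - z<..}|lebesgue.
         z * Psi z y * g z s * g y s)"
    using weak_solution_truncated_mass[OF assms(1,3,5) _ _ \<open>q > 0\<close>]
      weak_solution_coag_term[OF assms(1,5) _ \<open>q > 0\<close>] by simp
qed

end
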